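(* With the coupled chains $(X,Y)$ described in the context, for every $n\in\mathbb{Z}_+$, $$\mathbb{P}[Z(n)>0]\le\frac{2^N n}{N!},\qquad\text{where } Z(n)=\sum_{k=0}^{n-1}\mathbf{1}_{\{X(k)=Y(k),\,X(k+1)\neq Y(k+1)\}}.$$
   Context: Let $N\ge 5$. For $\sigma\in\mathcal{S}_N$ let $\eta_1(\sigma)$, $\eta_2(\sigma)$ be its numbers of fixed points and 2-cycles, $\nu$ the uniform measure on $\mathcal{S}_N$, $\pi_N$ the law of $\eta_1$ under $\nu$, and $p(x)=\mathbb{E}_\nu[\eta_2\mid\eta_1=x]$. Let $\check\pi$ be $\pi_N$ conditioned on $\{0,\dots,N-4\}$ and $\zeta$ the Poisson(1) law conditioned on $\{0,\dots,N-4\}$. On $\{0,\dots,N-4\}$ define birth–death kernels $\check P$ and $R$ by: for $x\ne y$, $\check P(x,x-1)=R(x,x-1)=\frac{x(N-x)}{N(N-1)}$, $\check P(x,x+1)=\frac{N-x-2p(x)}{N(N-1)}$ for $x\le N-5$, $R(x,x+1)=\frac{N-x-1}{N(N-1)}$ for $x\le N-5$, all other off-diagonal entries $0$, diagonal entries chosen so rows sum to 1. Let $(U(n))_{n\ge0}$ be i.i.d. uniform on $[0,1]$. The chain $X$ starts from $X(0)\sim\check\pi$, $Y$ from $Y(0)\sim\zeta$ (coupled arbitrarily at time 0), and for each $n$: $X(n+1)=X(n)-1$ if $U(n)<\check P(X(n),X(n)-1)$, $X(n+1)=X(n)$ if $\check P(X(n),X(n)-1)\le U(n)<\check P(X(n),X(n)-1)+\check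 P(X(n),X(n))$, and $X(n+1)=X(n)+1$ otherwise; $Y$ is updated by the same rule with $R$ in place of $\check P$ and the same $U(n)$. Thus $X$ is a stationary Markov chain with kernel $\check P$ and law $\check\pi$, and $Y$ a stationary Markov chain with kernel $R$ and law $\zeta$. *)

theory Defs
  imports "HOL-Probability.Probability"
begin

definition perms :: "nat \<Rightarrow> (nat \<Rightarrow> nat) set" where
  "perms N = {\<sigma>. \<sigma> permutes {..<N}}"

definition eta1 :: "nat \<Rightarrow> (nat \<Rightarrow> nat) \<Rightarrow> nat" where
  "eta1 N \<sigma> = card {i. i < N \<and> \<sigma> i = i}"

definition eta2 :: "nat \<Rightarrow> (nat \<Rightarrow> nat) \<Rightarrow> nat" where
  "eta2 N \<sigma> = card {{i, \<sigma> i} | i. i < N \<and> \<sigma> i \<noteq> i \<and> \<sigma> (\<sigma> i) = i}"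

definition piN :: "nat \<Rightarrow> nat \<Rightarrow> real" where
  "piN N x = real (card {\<sigma> \<in> perms N. eta1 N \<sigma> = x}) / real (card (perms N))"

definition pcond :: "nat \<Rightarrow> nat \<Rightarrow> real" where
  "pcond N x = (\<Sum>\<sigma>\<in>{\<sigma> \<in> perms N. eta1 N \<sigma> = x}. real (eta2 N \<sigma>))
               / real (card {\<sigma> \<in> perms N. eta1 N \<sigma> = x})"

definition checkpi :: "nat \<Rightarrow> nat \<Rightarrow> real" where
  "checkpi N x = (if x \<le> N - 4 then piN N x / (\<Sum>y\<le>N - 4. piN N y) else 0)"

definition zeta :: "nat \<Rightarrow> nat \<Rightarrow> real" where
  "zeta N x = (if x \<le> N - 4 then (exp (-1) / fact x) / (\<Sum>y\<le>N - 4. exp (-1) / fact y) else 0)"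

definition down :: "nat \<Rightarrow> nat \<Rightarrow> real" where
  "down N x = real x * (real N - real x) / (real N * (real N - 1))"

definition upP :: "nat \<Rightarrow> nat \<Rightarrow> real" where
  "upP N x = (if x \<le> N - 5 then (real N - real x - 2 * pcond N x) / (real N * (real N - 1)) else 0)"

definition upR :: "nat \<Rightarrow> nat \<Rightarrow> real" where
  "upR N x = (if x \<le> N - 5 then (real N - real x - 1) / (real N * (real N - 1)) else 0)"

definition stay :: "(nat \<Rightarrow> real) \<Rightarrow> (nat \<Rightarrow> real) \<Rightarrow> nat \<Rightarrow> real" where
  "stay dn up x = 1 - dn x - up x"

definition step :: "(nat \<Rightarrow> real) \<Rightarrow> (nat \<Rightarrow> real) \<Rightarrow> nat \<Rightarrow> real \<Rightarrow> nat" where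
  "step dn up x u =
     (if u < dn x then x - 1
      else if u < dn x + stay dn up x then x
      else x + 1)"

fun chain :: "(nat \<Rightarrow> real) \<Rightarrow> (nat \<Rightarrow> real) \<Rightarrow> nat \<Rightarrow> (nat \<Rightarrow> real) \<Rightarrow> nat \<Rightarrow> nat" where
  "chain dn up x0 u 0 = x0"
| "chain dn up x0 u (Suc n) = step dn up (chain dn up x0 u n) (u n)"

definition Xchain :: "nat \<Rightarrow> nat \<Rightarrow> (nat \<Rightarrow> real) \<Rightarrow> nat \<Rightarrow> nat" where
  "Xchain N x0 u = chain (down N) (upP N) x0 u"

definition Ychain :: "nat \<Rightarrow> nat \<Rightarrow> (nat \<Rightarrow> real) \<Rightarrow> nat \<Rightarrow> nat" where
  "Ychain N y0 u = chain (down N) (upR N) y0 u"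

definition Zcount :: "nat \<Rightarrow> nat \<Rightarrow> nat \<Rightarrow> (nat \<Rightarrow> real) \<Rightarrow> nat \<Rightarrow> nat" where
  "Zcount N x0 y0 u n = card {k. k < n \<and> Xchain N x0 u k = Ychain N y0 u k
                                    \<and> Xchain N x0 u (k + 1) \<noteq> Ychain N y0 u (k + 1)}"

end

theory Submission
  imports Defs "HOL-Combinatorics.Permutations"
begin

text \<open>Both chains move down with the same probability and use the same uniform, so two chains
  that have met at a state \<open>x\<close> separate in the next step only if \<open>U(k)\<close> falls between the two
  up-thresholds \<open>1 - P(x,x+1)\<close> and \<open>1 - R(x,x+1)\<close>, an interval of length
  \<open>|P(x,x+1) - R(x,x+1)|\<close>. As \<open>X\<close> is stationary and \<open>X(k)\<close> is independent of \<open>U(k)\<close>, this has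
  probability at most the \<open>\<pi>\<close>-average of the gap lengths at each time; a union bound over
  \<open>k < n\<close> gives the factor \<open>n\<close>.

  The gaps come from counting: with \<open>D\<close> the subfactorial, exactly \<open>C(N,x) D(N-x)\<close> permutations
  have \<open>x\<close> fixed points, and opening a 2-cycle into two fixed points shows that these permutations
  have \<open>C(x+2,2)\<close> times as many 2-cycles in total as there are permutations with \<open>x+2\<close> fixed
  points. The recurrences of \<open>D\<close> then yield detailed balance for \<open>P\<close> (hence stationarity) and
  \<open>N(N-1) \<pi>\<^sub>N(x) |P(x,x+1) - R(x,x+1)| = C(N,x) (N-x-1) / N!\<close>; summing over \<open>x\<close> and using
  \<open>\<pi>\<^sub>N(0) \<ge> 1/N\<close> for the normalisation gives \<open>2^N/N!\<close>.\<close>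

definition rencontres :: "nat \<Rightarrow> nat \<Rightarrow> nat" where
  "rencontres N x = card {\<sigma> \<in> perms N. eta1 N \<sigma> = x}"

definition eta2_sum :: "nat \<Rightarrow> nat \<Rightarrow> nat" where
  "eta2_sum N x = (\<Sum>\<sigma>\<in>{\<sigma> \<in> perms N. eta1 N \<sigma> = x}. eta2 N \<sigma>)"

lemma finite_perms: "finite (perms N)"
  unfolding perms_def by (simp add: finite_permutations)

lemma card_perms: "card (perms N) = fact N"
  unfolding perms_def by (simp add: card_permutations)

lemma piN_eq: "piN N x = real (rencontres N x) / fact N"
  unfolding piN_def rencontres_def card_perms by simp

lemma pcond_eq: "pcond N x = real (eta2_sum N x) / real (rencontres N x)"
  unfolding pcond_def eta2_sum_def rencontres_def by simp

subsection \<open>The recurrence for rencontres numbers\<close>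

lemma card_nonfixed: "card {b. b < n \<and> q b \<noteq> b} = n - eta1 n q"
proof -
  have "{b. b < n \<and> q b \<noteq> b} = {..<n} - {i. i < n \<and> q i = i}" by auto
  then show ?thesis
    unfolding eta1_def by (simp add: card_Diff_subset subset_eq)
qed

lemma eta1_Suc:
  assumes "q permutes {..<n}"
  shows "eta1 (Suc n) q = Suc (eta1 n q)"
proof -
  have "{i. i < Suc n \<and> q i = i} = insert n {i. i < n \<and> q i = i}"
    using assms by (auto simp: permutes_not_in)
  then show ?thesis unfolding eta1_def by simp
qed

lemma eta1_transpose_comp:
  assumes q: "q permutes {..<n}" and b: "b < n"
  shows "eta1 (Suc n) (Transposition.transpose n b \<circ> q) = eta1 n q - (if q b = b then 1 else 0)"
proof -
  have "i < Suc n \<and> (Transposition.transpose n b \<circ> q) i = i \<longleftrightarrow> i \<in> {i. i < n \<and> q i = i} - {b}" for i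
  proof (cases "i < n")
    case True
    then have "q i < n" using q by (metis lessThan_iff permutes_in_image)
    then show ?thesis using True b by (auto simp: Transposition.transpose_def)
  next
    case False
    then show ?thesis using b permutes_not_in[OF q, of n]
      by (auto simp: Transposition.transpose_def less_Suc_eq)
  qed
  then have "{i. i < Suc n \<and> (Transposition.transpose n b \<circ> q) i = i} = {i. i < n \<and> q i = i} - {b}"
    by blast
  then show ?thesis unfolding eta1_def using b by (simp add: card_Diff_singleton_if)
qed

lemma card_transpose_targets:
  assumes "q permutes {..<n}"
  shows "card {b. b < n \<and> eta1 n q - (if q b = b then 1 else 0) = x}
     = (if eta1 n q = x + 1 then x + 1 else 0) + (if eta1 n q = x then n - x else 0)"
proof -
  consider "eta1 n q = x" | "eta1 n q = x + 1" | "eta1 n q \<noteq> x" "eta1 n q \<noteq> x + 1" by blast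
  then show ?thesis
  proof cases
    case 1
    have "q b = b \<Longrightarrow> b < n \<Longrightarrow> 0 < eta1 n q" for b
      unfolding eta1_def by (subst card_gt_0_iff) auto
    then have "{b. b < n \<and> eta1 n q - (if q b = b then 1 else 0) = x} = {b. b < n \<and> q b \<noteq> b}"
      using 1 by force
    then show ?thesis using 1 card_nonfixed[of n q] by simp
  next
    case 2
    then have "{b. b < n \<and> eta1 n q - (if q b = b then 1 else 0) = x} = {b. b < n \<and> q b = b}"
      by auto
    then show ?thesis using 2 unfolding eta1_def by simp
  next
    case 3
    then have "{b. b < n \<and> eta1 n q - (if q b = b then 1 else 0) = x} = {}" by auto
    then show ?thesis using 3 by simp
  qed
qed

lemma rencontres_as_sum:
  "rencontres m y = (\<Sum>\<sigma>\<in>perms m. if eta1 m \<sigma> = y then 1 else 0)"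
  unfolding rencontres_def using finite_perms[of m] by (simp add: sum.If_cases Int_def)

lemma rencontres_Suc:
  "rencontres (Suc n) x = (if x \<ge> 1 then rencontres n (x - 1) else 0)
     + (x + 1) * rencontres n (x + 1) + (n - x) * rencontres n x"
proof -
  let ?f = "\<lambda>\<sigma>. if eta1 (Suc n) \<sigma> = x then (1::nat) else 0"
  let ?c = "\<lambda>q. (if eta1 n q = x + 1 then x + 1 else 0) + (if eta1 n q = x then n - x else 0)"
  have "rencontres (Suc n) x = (\<Sum>\<sigma>\<in>{p. p permutes insert n {..<n}}. ?f \<sigma>)"
    by (simp add: rencontres_as_sum perms_def lessThan_Suc)
  also have "\<dots> = (\<Sum>b\<in>insert n {..<n}. \<Sum>q\<in>perms n. ?f (Transposition.transpose n b \<circ> q))"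
    unfolding perms_def by (rule sum_over_permutations_insert) auto
  also have "\<dots> = (\<Sum>q\<in>perms n. ?f q) + (\<Sum>q\<in>perms n. \<Sum>b<n. ?f (Transposition.transpose n b \<circ> q))"
    by (simp add: sum.swap[where A = "perms n" and B = "{..<n}"])
  also have "(\<Sum>q\<in>perms n. ?f q) = (if x \<ge> 1 then rencontres n (x - 1) else 0)"
    by (cases x) (auto simp: rencontres_as_sum perms_def eta1_Suc intro!: sum.cong)
  also have "(\<Sum>q\<in>perms n. \<Sum>b<n. ?f (Transposition.transpose n b \<circ> q)) = (\<Sum>q\<in>perms n. ?c q)"
  proof (rule sum.cong)
    fix q assume "q \<in> perms n"
    then have q: "q permutes {..<n}" by (simp add: perms_def)
    have "(\<Sum>b<n. ?f (Transposition.transpose n b \<circ> q))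
        = card {b. b < n \<and> eta1 n q - (if q b = b then 1 else 0) = x}"
      by (simp add: eta1_transpose_comp[OF q] sum.If_cases lessThan_def Collect_conj_eq Int_commute)
    then show "(\<Sum>b<n. ?f (Transposition.transpose n b \<circ> q)) = ?c q"
      using card_transpose_targets[OF q] by simp
  qed simp
  also have "(\<Sum>q\<in>perms n. ?c q) = (x + 1) * rencontres n (x + 1) + (n - x) * rencontres n x"
    unfolding rencontres_as_sum sum.distrib sum_distrib_left
    by (intro arg_cong2[where f="(+)"] sum.cong) auto
  finally show ?thesis by simp
qed

subsection \<open>Closed form via the subfactorial\<close>

lemma binomial_Suc_absorb: "(k + 1) * (n choose (k + 1)) = (n - k) * (n choose k)"
  using binomial_absorption[of k n] binomial_absorb_comp[of n k] by simp

fun subfac :: "nat \<Rightarrow> int" where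
  "subfac 0 = 1"
| "subfac (Suc k) = int (Suc k) * subfac k + (-1) ^ Suc k"

lemma subfac_Suc_Suc: "subfac (Suc (Suc k)) = int (Suc k) * (subfac (Suc k) + subfac k)"
  by (simp add: algebra_simps)

declare subfac.simps(2)[simp del]

text \<open>Thanks to truncated subtraction this also holds, as \<open>0 = 0\<close>, for \<open>m = 0\<close>.\<close>
lemma subfac_Suc_eq: "subfac (Suc m) = int m * (subfac (m - 1) + subfac m)"
  by (cases m) (simp_all add: subfac_Suc_Suc subfac.simps(2)[of 0] add.commute)

lemma subfac_nonneg: "subfac k \<ge> 0"
proof (induction k rule: nat_less_induct)
  case (1 k)
  then show ?case by (cases k) (auto simp: subfac_Suc_eq)
qed

lemma subfac_ge_fact: "subfac (Suc (Suc k)) \<ge> fact (Suc k)"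
proof (induction k)
  case 0
  then show ?case by (simp add: subfac_Suc_Suc subfac.simps)
next
  case (Suc k)
  have "fact (Suc (Suc k)) = int (Suc (Suc k)) * fact (Suc k)"
    by (simp only: fact_Suc[of "Suc k"] of_nat_mult)
  also have "\<dots> \<le> int (Suc (Suc k)) * subfac (Suc (Suc k))"
    using Suc.IH by (intro mult_left_mono) auto
  also have "\<dots> \<le> subfac (Suc (Suc (Suc k)))"
    using subfac_nonneg[of "Suc k"] by (subst subfac_Suc_Suc) (simp add: algebra_simps)
  finally show ?case .
qed

lemma rencontres_0: "rencontres 0 x = (if x = 0 then 1 else 0)"
proof -
  have "perms 0 = {id}" by (auto simp: perms_def)
  then show ?thesis unfolding rencontres_def by (simp add: eta1_def)
qed

lemma rencontres_eq_subfac: "int (rencontres n x) = int (n choose x) * subfac (n - x)"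
proof (induction n arbitrary: x)
  case 0
  then show ?case by (simp add: rencontres_0)
next
  case (Suc n)
  have "int ((x + 1) * rencontres n (x + 1) + (n - x) * rencontres n x)
      = int ((x + 1) * (n choose (x + 1))) * subfac (n - (x + 1)) + int ((n - x) * (n choose x)) * subfac (n - x)"
    by (simp only: of_nat_add of_nat_mult Suc.IH mult.assoc)
  also have "\<dots> = int (n choose x) * (int (n - x) * (subfac (n - x - 1) + subfac (n - x)))"
    unfolding binomial_Suc_absorb diff_diff_left of_nat_mult by algebra
  also have "\<dots> = int (n choose x) * subfac (Suc (n - x))"
    unfolding subfac_Suc_eq[of "n - x"] ..
  also have "\<dots> = int (n choose x) * subfac (Suc n - x)"
    by (cases "x \<le> n") (simp_all add: Suc_diff_le)
  finally have tail: "int ((x + 1) * rencontres n (x + 1) + (n - x) * rencontres n x)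
      = int (n choose x) * subfac (Suc n - x)" .
  show ?case
  proof (cases x)
    case 0
    then show ?thesis using tail by (simp add: rencontres_Suc)
  next
    case (Suc y)
    have "int (rencontres (Suc n) x) = int (n choose y) * subfac (n - y) + int (n choose x) * subfac (Suc n - x)"
      using Suc.IH[of y] tail Suc by (simp add: rencontres_Suc)
    then show ?thesis using Suc by (simp add: algebra_simps)
  qed
qed

subsection \<open>Two-cycles\<close>

definition two_cycles :: "nat \<Rightarrow> (nat \<Rightarrow> nat) \<Rightarrow> nat set set" where
  "two_cycles N \<sigma> = {{i, \<sigma> i} | i. i < N \<and> \<sigma> i \<noteq> i \<and> \<sigma> (\<sigma> i) = i}"

definition fixed_pairs :: "nat \<Rightarrow> (nat \<Rightarrow> nat) \<Rightarrow> nat set set" where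
  "fixed_pairs N \<tau> = {e. e \<subseteq> {i. i < N \<and> \<tau> i = i} \<and> card e = 2}"

definition open_cycle :: "nat set \<Rightarrow> (nat \<Rightarrow> nat) \<Rightarrow> nat \<Rightarrow> nat" where
  "open_cycle e \<sigma> = (\<lambda>k. if k \<in> e then k else \<sigma> k)"

text \<open>For \<open>e = {a, b}\<close> the map \<open>k \<mapsto> \<Sum>e - k\<close> swaps \<open>a\<close> and \<open>b\<close>.\<close>
definition close_pair :: "nat set \<Rightarrow> (nat \<Rightarrow> nat) \<Rightarrow> nat \<Rightarrow> nat" where
  "close_pair e \<tau> = (\<lambda>k. if k \<in> e then \<Sum>e - k else \<tau> k)"

lemma open_cycle_correct:
  assumes s: "\<sigma> permutes {..<N}" and i: "i < N" "\<sigma> i \<noteq> i" "\<sigma> (\<sigma> i) = i"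
  shows "open_cycle {i, \<sigma> i} \<sigma> permutes {..<N}"
    "eta1 N (open_cycle {i, \<sigma> i} \<sigma>) = eta1 N \<sigma> + 2"
    "{i, \<sigma> i} \<in> fixed_pairs N (open_cycle {i, \<sigma> i} \<sigma>)"
    "close_pair {i, \<sigma> i} (open_cycle {i, \<sigma> i} \<sigma>) = \<sigma>"
proof -
  define j where "j = \<sigma> i"
  have ij: "i \<noteq> j" "\<sigma> j = i" "\<sigma> i = j" using i unfolding j_def by auto
  have jN: "j < N" using s i permutes_in_image unfolding j_def by fastforce
  have pi: "open_cycle {i, j} \<sigma> i = i" and pj: "open_cycle {i, j} \<sigma> j = j" unfolding open_cycle_def by simp_all
  have po: "k \<noteq> i \<Longrightarrow> k \<noteq> j \<Longrightarrow> open_cycle {i, j} \<sigma> k = \<sigma> k" for k unfolding open_cycle_def by simp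
  have eq: "open_cycle {i, j} \<sigma> = \<sigma> \<circ> Transposition.transpose i j"
  proof
    fix k show "open_cycle {i, j} \<sigma> k = (\<sigma> \<circ> Transposition.transpose i j) k"
      by (cases "k = i"; cases "k = j") (simp_all add: pi pj po ij ij(1)[symmetric] Transposition.transpose_def)
  qed
  show "open_cycle {i, \<sigma> i} \<sigma> permutes {..<N}"
    unfolding j_def[symmetric] eq using s i jN by (intro permutes_compose permutes_swap_id) auto
  have fx: "{k. k < N \<and> open_cycle {i, j} \<sigma> k = k} = insert i (insert j {k. k < N \<and> \<sigma> k = k})"
  proof (rule set_eqI)
    fix k show "k \<in> {k. k < N \<and> open_cycle {i, j} \<sigma> k = k} \<longleftrightarrow> k \<in> insert i (insert j {k. k < N \<and> \<sigma> k = k})"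
      by (cases "k = i"; cases "k = j") (simp_all add: pi pj po ij ij(1)[symmetric] i(1) jN)
  qed
  have nf: "i \<notin> {k. k < N \<and> \<sigma> k = k}" "j \<notin> {k. k < N \<and> \<sigma> k = k}"
    using ij by auto
  then show "eta1 N (open_cycle {i, \<sigma> i} \<sigma>) = eta1 N \<sigma> + 2"
    unfolding eta1_def j_def[symmetric] fx using ij(1) by simp
  show "{i, \<sigma> i} \<in> fixed_pairs N (open_cycle {i, \<sigma> i} \<sigma>)"
    unfolding fixed_pairs_def j_def[symmetric] fx using ij(1) by simp
  have se: "\<Sum>{i, j} = i + j" using ij(1) by simp
  show "close_pair {i, \<sigma> i} (open_cycle {i, \<sigma> i} \<sigma>) = \<sigma>"
  proof
    fix k show "close_pair {i, \<sigma> i} (open_cycle {i, \<sigma> i} \<sigma>) k = \<sigma> k"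
      unfolding j_def[symmetric]
      by (cases "k = i"; cases "k = j") (simp_all add: close_pair_def se pi pj po ij ij(1)[symmetric])
  qed
qed

lemma close_pair_correct:
  assumes t: "\<tau> permutes {..<N}" and e: "e \<in> fixed_pairs N \<tau>"
  shows "close_pair e \<tau> permutes {..<N}"
    "eta1 N (close_pair e \<tau>) = eta1 N \<tau> - 2"
    "e \<in> two_cycles N (close_pair e \<tau>)"
    "open_cycle e (close_pair e \<tau>) = \<tau>"
proof -
  obtain a b where ab: "e = {a, b}" "a \<noteq> b" using e unfolding fixed_pairs_def by (auto simp: card_2_iff)
  have fa: "a < N" "\<tau> a = a" "b < N" "\<tau> b = b" using e ab unfolding fixed_pairs_def by auto
  have se: "\<Sum>e = a + b" using ab by simp
  have pa: "close_pair e \<tau> a = b" and pb: "close_pair e \<tau> b = a" unfolding close_pair_def using se ab by simp_all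
  have po: "k \<noteq> a \<Longrightarrow> k \<noteq> b \<Longrightarrow> close_pair e \<tau> k = \<tau> k" for k unfolding close_pair_def ab(1) by simp
  have eq: "close_pair e \<tau> = \<tau> \<circ> Transposition.transpose a b"
  proof
    fix k show "close_pair e \<tau> k = (\<tau> \<circ> Transposition.transpose a b) k"
      by (cases "k = a"; cases "k = b") (simp_all add: pa pb po fa ab(2) ab(2)[symmetric] Transposition.transpose_def)
  qed
  show "close_pair e \<tau> permutes {..<N}"
    unfolding eq using t fa by (intro permutes_compose permutes_swap_id) auto
  have fx: "{k. k < N \<and> close_pair e \<tau> k = k} = {k. k < N \<and> \<tau> k = k} - {a, b}"
  proof (rule set_eqI)
    fix k show "k \<in> {k. k < N \<and> close_pair e \<tau> k = k} \<longleftrightarrow> k \<in> {k. k < N \<and> \<tau> k = k} - {a, b}"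
      by (cases "k = a"; cases "k = b") (simp_all add: pa pb po ab(2) ab(2)[symmetric])
  qed
  have "{a, b} \<subseteq> {k. k < N \<and> \<tau> k = k}" using fa by auto
  then show "eta1 N (close_pair e \<tau>) = eta1 N \<tau> - 2"
    unfolding eta1_def fx using ab by (simp add: card_Diff_subset)
  have "e = {a, close_pair e \<tau> a}" "a < N" "close_pair e \<tau> a \<noteq> a" "close_pair e \<tau> (close_pair e \<tau> a) = a"
    using pa pb ab fa by auto
  then show "e \<in> two_cycles N (close_pair e \<tau>)"
    unfolding two_cycles_def by blast
  show "open_cycle e (close_pair e \<tau>) = \<tau>"
  proof
    fix k show "open_cycle e (close_pair e \<tau>) k = \<tau> k"
      by (cases "k = a"; cases "k = b") (simp_all add: open_cycle_def ab pa pb po fa ab(2)[symmetric] close_pair_def)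
  qed
qed

lemma finite_two_cycles: "finite (two_cycles N \<sigma>)"
proof -
  have "two_cycles N \<sigma> \<subseteq> (\<lambda>i. {i, \<sigma> i}) ` {..<N}" unfolding two_cycles_def by auto
  thus ?thesis by (rule finite_subset) auto
qed

lemma card_fixed_pairs: "card (fixed_pairs N \<tau>) = eta1 N \<tau> choose 2"
  unfolding fixed_pairs_def eta1_def by (rule n_subsets) simp

text \<open>Opening a two-cycle of \<open>\<sigma>\<close> into two fixed points is a bijection from pairs
  (\<open>\<sigma>\<close> with \<open>x\<close> fixed points, a two-cycle of \<open>\<sigma>\<close>) onto pairs
  (\<open>\<tau>\<close> with \<open>x + 2\<close> fixed points, a two-element set of fixed points of \<open>\<tau>\<close>).\<close>
lemma eta2_sum_eq: "eta2_sum N x = ((x + 2) choose 2) * rencontres N (x + 2)"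
proof -
  let ?S1 = "SIGMA \<sigma>:{\<sigma> \<in> perms N. eta1 N \<sigma> = x}. two_cycles N \<sigma>"
  let ?S2 = "SIGMA \<tau>:{\<tau> \<in> perms N. eta1 N \<tau> = x + 2}. fixed_pairs N \<tau>"
  have in_cycles: "e \<in> two_cycles N \<sigma> \<longleftrightarrow> (\<exists>i. e = {i, \<sigma> i} \<and> i < N \<and> \<sigma> i \<noteq> i \<and> \<sigma> (\<sigma> i) = i)"
    for e \<sigma> by (auto simp: two_cycles_def)
  have "bij_betw (\<lambda>(\<sigma>, e). (open_cycle e \<sigma>, e)) ?S1 ?S2"
    by (rule bij_betw_byWitness[where f' = "\<lambda>(\<tau>, e). (close_pair e \<tau>, e)"])
       (auto simp: perms_def open_cycle_correct close_pair_correct dest!: in_cycles[THEN iffD1])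
  then have "card ?S1 = card ?S2" by (rule bij_betw_same_card)
  moreover have "eta2_sum N x = card ?S1"
    unfolding eta2_sum_def using finite_perms finite_two_cycles by (simp add: eta2_def two_cycles_def)
  moreover have "card ?S2 = (\<Sum>\<tau>\<in>{\<tau> \<in> perms N. eta1 N \<tau> = x + 2}. card (fixed_pairs N \<tau>))"
    using finite_perms by (simp add: fixed_pairs_def)
  ultimately show ?thesis by (simp add: card_fixed_pairs rencontres_def)
qed

lemma rencontres_identities:
  assumes N: "N = x + k + 2"
  shows "int (rencontres N x) = int (N choose x) * subfac (k + 2)"
    and "int (x + 1) * int (rencontres N (x + 1)) = int (N choose x) * int (k + 2) * subfac (k + 1)"
    and "2 * int (eta2_sum N x) = int (N choose x) * int (k + 2) * int (k + 1) * subfac k"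
proof -
  have d: "N - x = k + 2" "N - (x + 1) = k + 1" "N - (x + 2) = k" using N by simp_all
  have ab1: "(x + 1) * (N choose (x + 1)) = (k + 2) * (N choose x)"
    using binomial_Suc_absorb[of x N] d by simp
  have ab2: "(x + 2) * (N choose (x + 2)) = (k + 1) * (N choose (x + 1))"
    using binomial_Suc_absorb[of "x + 1" N] d by (simp add: add.commute)
  show "int (rencontres N x) = int (N choose x) * subfac (k + 2)"
    using rencontres_eq_subfac[of N x] unfolding d .
  have "int (x + 1) * int (rencontres N (x + 1)) = int ((x + 1) * (N choose (x + 1))) * subfac (k + 1)"
    using rencontres_eq_subfac[of N "x + 1"] unfolding d by (simp only: of_nat_mult mult.assoc)
  then show "int (x + 1) * int (rencontres N (x + 1)) = int (N choose x) * int (k + 2) * subfac (k + 1)"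
    unfolding ab1 by (simp add: algebra_simps)
  have two: "2 * ((x + 2) choose 2) = (x + 2) * (x + 1)"
    by (simp add: choose_two)
  have "2 * int (eta2_sum N x) = int (2 * ((x + 2) choose 2)) * int (rencontres N (x + 2))"
    unfolding eta2_sum_eq by simp
  also have "\<dots> = int ((x + 1) * ((x + 2) * (N choose (x + 2)))) * subfac k"
    unfolding two rencontres_eq_subfac d by (simp add: algebra_simps)
  also have "\<dots> = int (N choose x) * int (k + 2) * int (k + 1) * subfac k"
  proof -
    have "(x + 1) * ((x + 2) * (N choose (x + 2))) = (k + 1) * ((x + 1) * (N choose (x + 1)))"
      unfolding ab2 by (simp only: ac_simps)
    then show ?thesis unfolding ab1 by (simp add: algebra_simps)
  qed
  finally show "2 * int (eta2_sum N x) = int (N choose x) * int (k + 2) * int (k + 1) * subfac k" .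
qed

lemma rencontres_pos:
  assumes "x + 2 \<le> N"
  shows "0 < rencontres N x"
proof -
  have N: "N = x + (N - x - 2) + 2" using assms by simp
  have "(1::int) \<le> fact (Suc (N - x - 2))" by (rule fact_ge_1)
  also have "\<dots> \<le> subfac (N - x - 2 + 2)" using subfac_ge_fact[of "N - x - 2"] by simp
  finally have "1 \<le> subfac (N - x - 2 + 2)" .
  moreover have "1 \<le> int (N choose x)" using assms by (simp add: Suc_le_eq zero_less_binomial)
  ultimately have "1 * 1 \<le> int (N choose x) * subfac (N - x - 2 + 2)"
    by (intro mult_mono) auto
  then show ?thesis using rencontres_identities(1)[OF N] by simp
qed

lemma fact_le_rencontres_0:
  assumes "2 \<le> N"
  shows "fact (N - 1) \<le> real (rencontres N 0)"
proof -
  have N: "N = 0 + (N - 2) + 2" using assms by simp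
  have "fact (N - 1) \<le> subfac (N - 2 + 2)"
    using subfac_ge_fact[of "N - 2"] assms by (simp add: Suc_diff_Suc numeral_2_eq_2)
  also have "\<dots> = int (rencontres N 0)" using rencontres_identities(1)[OF N] by simp
  finally show ?thesis by (metis of_int_fact of_int_le_iff of_int_of_nat_eq)
qed

lemma rencontres_balance:
  assumes "x + 2 \<le> N"
  shows "real (rencontres N x) * (real N - real x) - 2 * real (eta2_sum N x)
       = real (rencontres N (x + 1)) * (real x + 1) * (real N - real x - 1)"
proof -
  define k where "k = N - x - 2"
  have N: "N = x + k + 2" using assms k_def by simp
  have "int (rencontres N x) * int (k + 2) - 2 * int (eta2_sum N x)
      = int (rencontres N (x + 1)) * int (x + 1) * int (k + 1)"
    using rencontres_identities[OF N] subfac_Suc_Suc[of k] by (simp add: algebra_simps)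
  then have "real_of_int (int (rencontres N x) * int (k + 2) - 2 * int (eta2_sum N x))
      = real_of_int (int (rencontres N (x + 1)) * int (x + 1) * int (k + 1))"
    by (simp only:)
  then show ?thesis using N by (simp add: algebra_simps)
qed

lemma abs_rencontres_minus_eta2_sum:
  assumes "x + 2 \<le> N"
  shows "\<bar>real (rencontres N x) - 2 * real (eta2_sum N x)\<bar> = real (N choose x) * (real N - real x - 1)"
proof -
  define k where "k = N - x - 2"
  have N: "N = x + k + 2" using assms k_def by simp
  have alt: "subfac (Suc (Suc k)) - int (Suc (Suc k)) * int (Suc k) * subfac k = (-1) ^ Suc k * int (Suc k)"
    by (simp add: subfac.simps algebra_simps)
  have "int (rencontres N x) - 2 * int (eta2_sum N x)
      = int (N choose x) * (subfac (Suc (Suc k)) - int (Suc (Suc k)) * int (Suc k) * subfac k)"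
    using rencontres_identities[OF N] by (simp add: algebra_simps)
  then have "real_of_int \<bar>int (rencontres N x) - 2 * int (eta2_sum N x)\<bar> = real_of_int (int (N choose x) * int (k + 1))"
    unfolding alt by (simp add: abs_mult)
  then show ?thesis using N by simp
qed

lemma eta2_sum_le:
  assumes "x + 2 \<le> N"
  shows "2 * real (eta2_sum N x) \<le> (real N - real x) * real (rencontres N x)"
proof -
  define k where "k = N - x - 2"
  have N: "N = x + k + 2" using assms k_def by simp
  have "int (k + 1) * subfac k \<le> subfac (k + 2)"
    using subfac_Suc_Suc[of k] subfac_nonneg[of "Suc k"] by (simp add: algebra_simps)
  then have "int (N choose x) * int (k + 2) * (int (k + 1) * subfac k) \<le> int (N choose x) * int (k + 2) * subfac (k + 2)"
    by (intro mult_left_mono) auto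
  then have "real_of_int (2 * int (eta2_sum N x)) \<le> real_of_int (int (k + 2) * int (rencontres N x))"
    unfolding of_int_le_iff using rencontres_identities[OF N] by (simp add: algebra_simps)
  then show ?thesis using N by simp
qed

subsection \<open>The kernels \<open>P\<close> and \<open>R\<close>\<close>

lemma pcond_nonneg: "0 \<le> pcond N x"
  unfolding pcond_eq by simp

lemma two_pcond_le:
  assumes "x + 2 \<le> N"
  shows "2 * pcond N x \<le> real N - real x"
  using eta2_sum_le[OF assms] rencontres_pos[OF assms] by (simp add: pcond_eq field_simps)

lemma down_0 [simp]: "down N 0 = 0"
  by (simp add: down_def)

lemma rates_bounded:
  assumes N: "N \<ge> 5" and x: "x \<le> N - 4"
  shows "0 \<le> down N x" "0 \<le> upP N x" "0 \<le> upR N x"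
    "down N x + upP N x \<le> 1" "down N x + upR N x \<le> 1"
proof -
  have NN: "real N * (real N - 1) > 0" using N by simp
  have xN: "real x \<le> real N - 4" using x N by (simp add: of_nat_diff)
  show "0 \<le> down N x" "0 \<le> upR N x" unfolding down_def upR_def using NN xN by simp_all
  show "0 \<le> upP N x"
    unfolding upP_def using NN two_pcond_le[of x N] N by simp
  have "(real N - real x) * (real x + 1) \<le> real N * (real N - 1)"
    using xN by (intro mult_mono) auto
  then have total: "(real x * (real N - real x) + (real N - real x)) / (real N * (real N - 1)) \<le> 1"
    using NN by (simp add: algebra_simps)
  have "upP N x \<le> (real N - real x) / (real N * (real N - 1))"
    "upR N x \<le> (real N - real x) / (real N * (real N - 1))"
    unfolding upP_def upR_def using NN pcond_nonneg[of N x] xN by (auto simp: divide_right_mono)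
  then show "down N x + upP N x \<le> 1" "down N x + upR N x \<le> 1"
    using total unfolding down_def by (simp_all add: add_divide_distrib)
qed

definition piN_mass :: "nat \<Rightarrow> real" where
  "piN_mass N = (\<Sum>y\<le>N - 4. piN N y)"

lemma piN_mass_ge: "N \<ge> 2 \<Longrightarrow> 1 / real N \<le> piN_mass N"
proof -
  assume N: "N \<ge> 2"
  have "fact N = real N * fact (N - 1)" using N fact_reduce[of N] by simp
  then have "1 / real N = fact (N - 1) / fact N" by simp
  also have "\<dots> \<le> piN N 0"
    unfolding piN_eq using fact_le_rencontres_0[OF N] by (intro divide_right_mono) auto
  also have "\<dots> \<le> piN_mass N"
    unfolding piN_mass_def by (rule member_le_sum) (auto simp: piN_eq)
  finally show ?thesis .
qed

lemma piN_mass_pos: "N \<ge> 2 \<Longrightarrow> 0 < piN_mass N"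
  by (rule less_le_trans[OF _ piN_mass_ge]) auto

lemma checkpi_eq: "checkpi N x = (if x \<le> N - 4 then real (rencontres N x) / (fact N * piN_mass N) else 0)"
  unfolding checkpi_def piN_mass_def piN_eq by simp

lemma checkpi_sum: "N \<ge> 2 \<Longrightarrow> (\<Sum>x\<le>N - 4. checkpi N x) = 1"
  using piN_mass_pos[of N] by (simp add: checkpi_def sum_divide_distrib[symmetric] piN_mass_def)

lemma checkpi_eq_0: "N - 4 < x \<Longrightarrow> checkpi N x = 0"
  by (simp add: checkpi_def)

lemma zeta_sum: "(\<Sum>x\<le>N - 4. zeta N x) = 1"
proof -
  have "0 < exp (-1) / (fact 0 :: real)" by simp
  also have "\<dots> \<le> (\<Sum>y\<le>N - 4. exp (-1) / fact y :: real)"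
    by (rule member_le_sum) auto
  finally have "(\<Sum>y\<le>N - 4. exp (-1) / fact y :: real) \<noteq> 0" by simp
  moreover have "(\<Sum>x\<le>N - 4. zeta N x)
      = (\<Sum>x\<le>N - 4. exp (-1) / fact x) / (\<Sum>y\<le>N - 4. exp (-1) / fact y :: real)"
    unfolding zeta_def sum_divide_distrib by (rule sum.cong) auto
  ultimately show ?thesis by simp
qed

lemma checkpi_detailed_balance:
  assumes N: "N \<ge> 5"
  shows "checkpi N x * upP N x = checkpi N (Suc x) * down N (Suc x)"
proof (cases "x \<le> N - 5")
  case True
  have x: "x + 2 \<le> N" using True N by simp
  have r: "real (rencontres N x) > 0" using rencontres_pos[OF x] by simp
  have D: "real N * (real N - 1) \<noteq> 0" using N by simp
  have "real (rencontres N x) * upP N x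
      = (real (rencontres N x) * (real N - real x) - 2 * real (eta2_sum N x)) / (real N * (real N - 1))"
    using True r D unfolding upP_def pcond_eq by (simp add: field_simps)
  also have "\<dots> = real (rencontres N (x + 1)) * down N (Suc x)"
    unfolding rencontres_balance[OF x] down_def by (simp add: algebra_simps)
  finally show ?thesis using True N by (simp add: checkpi_eq field_simps)
next
  case False
  then show ?thesis by (simp add: upP_def checkpi_def)
qed

lemma abs_upP_minus_upR:
  assumes N: "N \<ge> 5" and x: "x \<le> N - 5"
  shows "\<bar>upP N x - upR N x\<bar>
    = real (N choose x) * (real N - real x - 1) / (real (rencontres N x) * (real N * (real N - 1)))"
proof -
  have x2: "x + 2 \<le> N" using x N by simp
  let ?r = "real (rencontres N x)" and ?D = "real N * (real N - 1)"
  have r: "?r > 0" using rencontres_pos[OF x2] by simp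
  have D: "?D > 0" using N by simp
  have "upP N x - upR N x = (1 - 2 * (real (eta2_sum N x) / ?r)) / ?D"
    using x unfolding upP_def upR_def pcond_eq by (simp add: diff_divide_distrib)
  also have "\<dots> = (?r - 2 * real (eta2_sum N x)) / (?r * ?D)"
    using r D by (simp add: field_simps)
  finally show ?thesis
    using r D by (simp add: abs_divide abs_rencontres_minus_eta2_sum[OF x2])
qed

lemma checkpi_gap_le:
  assumes N: "N \<ge> 5" and x: "x \<le> N - 4"
  shows "checkpi N x * \<bar>upP N x - upR N x\<bar> \<le> real (N choose x) / (fact N * piN_mass N * real N)"
proof (cases "x \<le> N - 5")
  case True
  have r: "real (rencontres N x) > 0" using rencontres_pos[of x N] True N by simp
  have Z: "piN_mass N > 0" using N piN_mass_pos[of N] by simp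
  have "checkpi N x * \<bar>upP N x - upR N x\<bar>
      = real (N choose x) * (real N - real x - 1) / (fact N * piN_mass N * (real N * (real N - 1)))"
  proof -
    have "real N * (real N - 1) \<noteq> 0" using N by simp
    then show ?thesis
      using x r Z unfolding abs_upP_minus_upR[OF N True] by (simp add: checkpi_eq field_simps)
  qed
  also have "\<dots> \<le> real (N choose x) * (real N - 1) / (fact N * piN_mass N * (real N * (real N - 1)))"
    using Z N by (intro divide_right_mono mult_left_mono) auto
  also have "\<dots> = real (N choose x) / (fact N * piN_mass N * real N)"
    using N Z by (simp add: field_simps)
  finally show ?thesis .
next
  case False
  then show ?thesis using piN_mass_pos[of N] N by (simp add: upP_def upR_def)
qed

lemma checkpi_gap_sum:
  assumes N: "N \<ge> 5"
  shows "(\<Sum>x\<le>N - 4. checkpi N x * \<bar>upP N x - upR N x\<bar>) \<le> 2 ^ N / fact N"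
proof -
  have Z: "piN_mass N > 0" using piN_mass_pos[of N] N by simp
  have "(\<Sum>x\<le>N - 4. checkpi N x * \<bar>upP N x - upR N x\<bar>)
      \<le> (\<Sum>x\<le>N - 4. real (N choose x) / (fact N * piN_mass N * real N))"
    using checkpi_gap_le[OF N] by (intro sum_mono) simp
  also have "\<dots> = (\<Sum>x\<le>N - 4. real (N choose x)) / (fact N * piN_mass N * real N)"
    by (simp add: sum_divide_distrib)
  also have "\<dots> \<le> (\<Sum>x\<le>N. real (N choose x)) / (fact N * piN_mass N * real N)"
    using Z N by (intro divide_right_mono sum_mono2) auto
  also have "\<dots> = 2 ^ N / (fact N * (piN_mass N * real N))"
    by (simp flip: of_nat_sum choose_row_sum add: mult.assoc)
  also have "\<dots> \<le> 2 ^ N / fact N"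
    using piN_mass_ge[of N] Z N by (intro divide_left_mono) (auto simp: field_simps)
  finally show ?thesis .
qed

subsection \<open>Birth--death chains driven by uniform variables\<close>

lemma step_eq_thresholds:
  "step dn up y u = (if u < dn y then y - 1 else if u < 1 - up y then y else y + 1)"
  unfolding step_def stay_def by simp

lemma measurable_step [measurable]: "step dn up y \<in> borel \<rightarrow>\<^sub>M count_space UNIV"
  unfolding step_def by measurable

lemma step_le_Suc: "step dn up y u \<le> Suc y"
  unfolding step_def by auto

lemma chain_le: "chain dn up x0 u k \<le> x0 + k"
proof (induction k)
  case (Suc k)
  then show ?case using step_le_Suc[of dn up "chain dn up x0 u k" "u k"] by simp
qed simp

lemma chain_cong: "(\<And>j. j < k \<Longrightarrow> u j = v j) \<Longrightarrow> chain dn up x0 u k = chain dn up x0 v k"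
  by (induction k) auto

lemma measurable_chain:
  "{..<k} \<subseteq> I \<Longrightarrow> (\<lambda>u. chain dn up x0 u k) \<in> PiM I (\<lambda>_. borel) \<rightarrow>\<^sub>M count_space UNIV"
proof (induction k)
  case (Suc k)
  then have "k \<in> I" and "{..<k} \<subseteq> I" by auto
  have "(\<lambda>u. step dn up z (u k)) \<in> PiM I (\<lambda>_. borel) \<rightarrow>\<^sub>M count_space UNIV" for z
    by (rule measurable_compose[OF measurable_component_singleton[OF \<open>k \<in> I\<close>] measurable_step])
  from measurable_compose_countable[where f = "\<lambda>z u. step dn up z (u k)", OF this Suc.IH[OF \<open>{..<k} \<subseteq> I\<close>]]
  show ?case by simp
qed simp

definition bd_kernel :: "(nat \<Rightarrow> real) \<Rightarrow> (nat \<Rightarrow> real) \<Rightarrow> nat \<Rightarrow> nat \<Rightarrow> real" where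
  "bd_kernel dn up y x = (if Suc x = y then dn y else 0) + (if x = y then stay dn up y else 0)
     + (if x = Suc y then up y else 0)"

text \<open>At state \<open>0\<close> a down-move would be truncated to a stay, hence \<open>dn 0 = 0\<close>.\<close>
lemma measure_step_eq:
  assumes "0 \<le> dn y" "0 \<le> up y" "dn y + up y \<le> 1" and dn0: "dn 0 = 0"
  shows "measure lborel ({0..1} \<inter> {u. step dn up y u = x}) = bd_kernel dn up y x"
proof -
  define a b where "a = dn y" and "b = 1 - up y"
  have ab: "0 \<le> a" "a \<le> b" "b \<le> 1" "y = 0 \<Longrightarrow> a = 0" using assms unfolding a_def b_def by auto
  have step: "step dn up y u = (if u < a then y - 1 else if u < b then y else y + 1)" for u
    unfolding a_def b_def by (rule step_eq_thresholds)
  consider "Suc x = y" | "x = y" | "x = Suc y" | "Suc x \<noteq> y" "x \<noteq> y" "x \<noteq> Suc y" by blast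
  then show ?thesis
  proof cases
    case 1
    then have "{0..1} \<inter> {u. step dn up y u = x} = {0..<a}" unfolding step using ab by auto
    then show ?thesis using 1 ab by (simp add: bd_kernel_def a_def)
  next
    case 2
    then have "{0..1} \<inter> {u. step dn up y u = x} = {a..<b}" unfolding step using ab by (cases "y = 0") auto
    then show ?thesis using 2 ab by (simp add: bd_kernel_def stay_def a_def b_def)
  next
    case 3
    then have "{0..1} \<inter> {u. step dn up y u = x} = {b..1}" unfolding step using ab by auto
    then show ?thesis using 3 ab by (simp add: bd_kernel_def b_def)
  next
    case 4
    then have "{0..1} \<inter> {u. step dn up y u = x} = {}" unfolding step by auto
    then show ?thesis using 4 by (simp add: bd_kernel_def)
  qed
qed

lemma sum_bd_kernel_balance:
  fixes \<pi> dn up :: "nat \<Rightarrow> real"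
  assumes balance: "\<And>x. \<pi> x * up x = \<pi> (Suc x) * dn (Suc x)"
    and support: "\<And>y. L < y \<Longrightarrow> \<pi> y = 0" and "L \<le> K" and dn0: "dn 0 = 0"
  shows "(\<Sum>y\<le>K. \<pi> y * bd_kernel dn up y x) = \<pi> x"
proof -
  have sum_at: "(\<Sum>y\<le>K. if y = z then f y else 0) = f z" if "\<pi> z = 0 \<Longrightarrow> f z = 0" for f and z
    using that support \<open>L \<le> K\<close> by (cases "z \<le> K") auto
  have "(\<Sum>y\<le>K. \<pi> y * bd_kernel dn up y x)
      = (\<Sum>y\<le>K. if y = Suc x then \<pi> y * dn y else 0) + (\<Sum>y\<le>K. if y = x then \<pi> y * stay dn up y else 0)
        + (\<Sum>y\<le>K. if Suc y = x then \<pi> y * up y else 0)"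
    unfolding bd_kernel_def sum.distrib[symmetric] by (rule sum.cong) (auto simp: algebra_simps)
  also have "(\<Sum>y\<le>K. if y = Suc x then \<pi> y * dn y else 0) = \<pi> x * up x"
    by (subst sum_at) (auto simp: balance)
  also have "(\<Sum>y\<le>K. if y = x then \<pi> y * stay dn up y else 0) = \<pi> x * stay dn up x"
    by (rule sum_at) simp
  also have "(\<Sum>y\<le>K. if Suc y = x then \<pi> y * up y else 0) = \<pi> x * dn x"
  proof (cases x)
    case (Suc z)
    have "(\<Sum>y\<le>K. if Suc y = x then \<pi> y * up y else 0) = (\<Sum>y\<le>K. if y = z then \<pi> y * up y else 0)"
      using Suc by (intro sum.cong) auto
    also have "\<dots> = \<pi> x * dn x"
      by (subst sum_at) (auto simp: balance Suc)
    finally show ?thesis .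
  qed (simp add: dn0)
  finally show ?thesis unfolding stay_def by (simp add: algebra_simps)
qed

definition gap_interval :: "(nat \<Rightarrow> real) \<Rightarrow> (nat \<Rightarrow> real) \<Rightarrow> nat \<Rightarrow> real set" where
  "gap_interval upA upB y = {min (1 - upA y) (1 - upB y) ..< max (1 - upA y) (1 - upB y)}"

lemma step_neq_imp_gap:
  "step dn upA y u \<noteq> step dn upB y u \<Longrightarrow> u \<in> gap_interval upA upB y"
  unfolding gap_interval_def step_eq_thresholds by (auto split: if_splits)

lemma gap_interval_borel [measurable]: "gap_interval upA upB y \<in> sets borel"
  unfolding gap_interval_def by simp

lemma measure_gap_interval_le: "measure lborel ({0..1} \<inter> gap_interval upA upB y) \<le> \<bar>upA y - upB y\<bar>"
proof -
  let ?c = "min (1 - upA y) (1 - upB y)" and ?d = "max (1 - upA y) (1 - upB y)"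
  have "measure lborel ({0..1} \<inter> gap_interval upA upB y) \<le> measure lborel {?c..?d}"
    by (rule measure_mono_fmeasurable) (auto simp: gap_interval_def intro: fmeasurable_compact)
  also have "\<dots> = \<bar>upA y - upB y\<bar>" by (simp add: max_def min_def)
  finally show ?thesis .
qed

subsection \<open>Coupling through a common i.i.d. uniform sequence\<close>

context prob_space
begin

lemma prob_split_finite:
  assumes "finite S" "Measurable.pred M P" "Y \<in> M \<rightarrow>\<^sub>M count_space UNIV"
  shows "prob {\<omega> \<in> space M. P \<omega> \<and> Y \<omega> \<in> S} = (\<Sum>y\<in>S. prob {\<omega> \<in> space M. P \<omega> \<and> Y \<omega> = y})"
proof -
  have "{\<omega> \<in> space M. P \<omega> \<and> Y \<omega> \<in> S} = (\<Union>y\<in>S. {\<omega> \<in> space M. P \<omega> \<and> Y \<omega> = y})" by auto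
  then show ?thesis
    using assms by (simp only:) (rule finite_measure_finite_Union, auto simp: disjoint_family_on_def)
qed

lemma AE_in_finite_support:
  assumes "X \<in> M \<rightarrow>\<^sub>M count_space UNIV" "finite S"
    and "\<And>x. prob {\<omega> \<in> space M. X \<omega> = x} = p x" "(\<Sum>x\<in>S. p x) = 1"
  shows "AE \<omega> in M. X \<omega> \<in> S"
proof -
  have "prob {\<omega> \<in> space M. True \<and> X \<omega> \<in> S} = 1"
    using assms by (subst prob_split_finite) auto
  from AE_prob_1[OF this] show ?thesis by auto
qed

lemma prob_indep_marginal:
  assumes X: "X \<in> M \<rightarrow>\<^sub>M count_space UNIV" and Y: "Y \<in> M \<rightarrow>\<^sub>M count_space UNIV"
    and V: "V \<in> M \<rightarrow>\<^sub>M N" and A: "A \<in> sets N"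
    and S: "finite S" "AE \<omega> in M. Y \<omega> \<in> S"
    and pair_indep: "\<And>y. prob {\<omega> \<in> space M. X \<omega> = x \<and> Y \<omega> = y \<and> V \<omega> \<in> A}
      = prob {\<omega> \<in> space M. X \<omega> = x \<and> Y \<omega> = y} * prob {\<omega> \<in> space M. V \<omega> \<in> A}"
  shows "prob {\<omega> \<in> space M. X \<omega> = x \<and> V \<omega> \<in> A}
    = prob {\<omega> \<in> space M. X \<omega> = x} * prob {\<omega> \<in> space M. V \<omega> \<in> A}"
proof -
  have VA: "Measurable.pred M (\<lambda>\<omega>. V \<omega> \<in> A)" using pred_sets2[OF A V] .
  have YS: "Measurable.pred M (\<lambda>\<omega>. Y \<omega> \<in> S)" using pred_sets2[OF _ Y, of S] by simp
  have XE: "Measurable.pred M (\<lambda>\<omega>. X \<omega> = x)" using X by measurable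
  have ev: "{\<omega> \<in> space M. X \<omega> = x \<and> V \<omega> \<in> A} \<in> events"
    "{\<omega> \<in> space M. (X \<omega> = x \<and> V \<omega> \<in> A) \<and> Y \<omega> \<in> S} \<in> events"
    "{\<omega> \<in> space M. X \<omega> = x \<and> Y \<omega> \<in> S} \<in> events"
    "{\<omega> \<in> space M. X \<omega> = x} \<in> events"
    using XE VA YS unfolding pred_def[symmetric] by (auto intro!: pred_intros_logic)
  have "prob {\<omega> \<in> space M. X \<omega> = x \<and> V \<omega> \<in> A} = prob {\<omega> \<in> space M. (X \<omega> = x \<and> V \<omega> \<in> A) \<and> Y \<omega> \<in> S}"
    by (rule measure_eq_AE[OF _ ev(1,2)]) (use S(2) in auto)
  also have "\<dots> = (\<Sum>y\<in>S. prob {\<omega> \<in> space M. (X \<omega> = x \<and> V \<omega> \<in> A) \<and> Y \<omega> = y})"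
    using X VA by (intro prob_split_finite[OF S(1) _ Y]) measurable
  also have "\<dots> = (\<Sum>y\<in>S. prob {\<omega> \<in> space M. X \<omega> = x \<and> Y \<omega> = y \<and> V \<omega> \<in> A})"
    by (intro sum.cong refl arg_cong[where f = prob]) blast
  also have "\<dots> = prob {\<omega> \<in> space M. X \<omega> = x \<and> Y \<omega> \<in> S} * prob {\<omega> \<in> space M. V \<omega> \<in> A}"
    by (simp only: pair_indep prob_split_finite[OF S(1) XE Y] sum_distrib_right)
  also have "prob {\<omega> \<in> space M. X \<omega> = x \<and> Y \<omega> \<in> S} = prob {\<omega> \<in> space M. X \<omega> = x}"
    by (rule measure_eq_AE[OF _ ev(3,4)]) (use S(2) in auto)
  finally show ?thesis .
qed

end

locale iid_uniform = prob_space M for M :: "'a measure" +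
  fixes U :: "nat \<Rightarrow> 'a \<Rightarrow> real"
  assumes indep: "indep_vars (\<lambda>_. borel) U UNIV"
    and uniform: "\<And>k. distr M lborel (U k) = uniform_measure lborel {0..1}"
begin

lemma measurable_U [measurable]: "U k \<in> borel_measurable M"
  using indep unfolding indep_vars_def by auto

lemma measurable_U_seq: "(\<lambda>\<omega> j. U j \<omega>) \<in> M \<rightarrow>\<^sub>M PiM UNIV (\<lambda>_. borel)"
  by (rule measurable_PiM_single') auto

lemma measurable_chain_U [measurable]:
  "(\<lambda>\<omega>. chain dn up x0 (\<lambda>j. U j \<omega>) k) \<in> M \<rightarrow>\<^sub>M count_space UNIV"
  using measurable_compose[OF measurable_U_seq measurable_chain[of k UNIV]] by simp

lemma prob_U_in:
  assumes "B \<in> sets borel"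
  shows "prob {\<omega> \<in> space M. U k \<omega> \<in> B} = measure lborel ({0..1} \<inter> B)"
proof -
  have "prob {\<omega> \<in> space M. U k \<omega> \<in> B} = measure (distr M lborel (U k)) B"
    using assms by (subst measure_distr) (auto simp: vimage_def Int_def conj_commute)
  also have "\<dots> = measure lborel ({0..1} \<inter> B)"
    using assms by (simp add: uniform measure_uniform_measure)
  finally show ?thesis .
qed

lemma prob_past_and_present:
  assumes A: "A \<in> sets (PiM {..<k} (\<lambda>_. borel))" and B: "B \<in> sets borel"
  shows "prob {\<omega> \<in> space M. restrict (\<lambda>j. U j \<omega>) {..<k} \<in> A \<and> U k \<omega> \<in> B}
       = prob {\<omega> \<in> space M. restrict (\<lambda>j. U j \<omega>) {..<k} \<in> A} * prob {\<omega> \<in> space M. U k \<omega> \<in> B}"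
proof -
  let ?past = "\<lambda>\<omega>. restrict (\<lambda>j. U j \<omega>) {..<k}" and ?now = "\<lambda>\<omega>. restrict (\<lambda>j. U j \<omega>) {k}"
  define B' where "B' = (\<lambda>f. f k) -` B \<inter> space (PiM {k} (\<lambda>_. borel :: real measure))"
  have indep_past: "indep_var (PiM {..<k} (\<lambda>_. borel)) ?past (PiM {k} (\<lambda>_. borel)) ?now"
    by (rule indep_var_restrict[OF indep]) auto
  have "(\<lambda>f. f k) \<in> PiM {k} (\<lambda>_. borel) \<rightarrow>\<^sub>M (borel :: real measure)"
    by (rule measurable_component_singleton) simp
  then have B': "B' \<in> sets (PiM {k} (\<lambda>_. borel))"
    unfolding B'_def using B by (rule measurable_sets)
  have "prob ((\<lambda>\<omega>. (?past \<omega>, ?now \<omega>)) -` (A \<times> B') \<inter> space M)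
      = prob (?past -` A \<inter> space M) * prob (?now -` B' \<inter> space M)"
    by (rule indep_varD[OF indep_past A B'])
  moreover have "?now -` B' \<inter> space M = {\<omega> \<in> space M. U k \<omega> \<in> B}"
    and "(\<lambda>\<omega>. (?past \<omega>, ?now \<omega>)) -` (A \<times> B') \<inter> space M = {\<omega> \<in> space M. ?past \<omega> \<in> A \<and> U k \<omega> \<in> B}"
    unfolding B'_def by (auto simp: space_PiM)
  ultimately show ?thesis by (simp add: vimage_def Int_def conj_commute)
qed

definition chain_law :: "(nat \<Rightarrow> real) \<Rightarrow> (nat \<Rightarrow> real) \<Rightarrow> nat \<Rightarrow> nat \<Rightarrow> nat \<Rightarrow> real" where
  "chain_law dn up x0 k y = prob {\<omega> \<in> space M. chain dn up x0 (\<lambda>j. U j \<omega>) k = y}"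

lemma chain_law_nonneg: "0 \<le> chain_law dn up x0 k y"
  unfolding chain_law_def by simp

lemma chain_law_0: "chain_law dn up x0 0 y = (if y = x0 then 1 else 0)"
  unfolding chain_law_def using prob_space by simp

text \<open>The state at time \<open>k\<close> depends only on \<open>U 0, \<dots>, U (k - 1)\<close>, hence is independent of \<open>U k\<close>.\<close>
lemma prob_chain_and_U_in:
  assumes B: "B \<in> sets borel"
  shows "prob {\<omega> \<in> space M. chain dn up x0 (\<lambda>j. U j \<omega>) k = y \<and> U k \<omega> \<in> B}
       = chain_law dn up x0 k y * measure lborel ({0..1} \<inter> B)"
proof -
  define A where "A = (\<lambda>u. chain dn up x0 u k) -` {y} \<inter> space (PiM {..<k} (\<lambda>_. borel :: real measure))"
  have A_sets: "A \<in> sets (PiM {..<k} (\<lambda>_. borel))"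
    unfolding A_def by (rule measurable_sets[OF measurable_chain]) auto
  have past: "restrict (\<lambda>j. U j \<omega>) {..<k} \<in> A \<longleftrightarrow> chain dn up x0 (\<lambda>j. U j \<omega>) k = y" for \<omega>
    using chain_cong[of k "restrict (\<lambda>j. U j \<omega>) {..<k}" "\<lambda>j. U j \<omega>"] unfolding A_def by (auto simp: space_PiM)
  show ?thesis
    using prob_past_and_present[OF A_sets B] unfolding past prob_U_in[OF B] chain_law_def .
qed

lemma chain_law_Suc:
  assumes "x0 + k \<le> L"
  shows "chain_law dn up x0 (Suc k) x
       = (\<Sum>y\<le>L. chain_law dn up x0 k y * measure lborel ({0..1} \<inter> {u. step dn up y u = x}))"
proof -
  let ?F = "\<lambda>y. {\<omega> \<in> space M. chain dn up x0 (\<lambda>j. U j \<omega>) k = y \<and> U k \<omega> \<in> {u. step dn up y u = x}}"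
  have step_sets: "{u. step dn up y u = x} \<in> sets borel" for y
    using measurable_sets[OF measurable_step, of "{x}" dn up y] by (simp add: vimage_def)
  have "{\<omega> \<in> space M. chain dn up x0 (\<lambda>j. U j \<omega>) (Suc k) = x} = (\<Union>y\<le>L. ?F y)"
    using chain_le[of dn up x0 _ k] assms by (auto intro: order_trans)
  then have "chain_law dn up x0 (Suc k) x = (\<Sum>y\<le>L. prob (?F y))"
    unfolding chain_law_def
    by (simp only:) (rule finite_measure_finite_Union, auto simp: disjoint_family_on_def)
  also have "\<dots> = (\<Sum>y\<le>L. chain_law dn up x0 k y * measure lborel ({0..1} \<inter> {u. step dn up y u = x}))"
    by (intro sum.cong refl prob_chain_and_U_in step_sets)
  finally show ?thesis .
qed

lemma chain_law_stationary:
  fixes \<pi> dn up :: "nat \<Rightarrow> real"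
  assumes balance: "\<And>x. \<pi> x * up x = \<pi> (Suc x) * dn (Suc x)"
    and support: "\<And>y. L < y \<Longrightarrow> \<pi> y = 0"
    and rates: "\<And>y. y \<le> L \<Longrightarrow> 0 \<le> dn y \<and> 0 \<le> up y \<and> dn y + up y \<le> 1"
    and dn0: "dn 0 = 0"
  shows "(\<Sum>x0\<le>L. \<pi> x0 * chain_law dn up x0 k x) = \<pi> x"
proof (induction k arbitrary: x)
  case 0
  show ?case using support[of x] by (cases "x \<le> L") (auto simp: chain_law_0 if_distrib cong: if_cong)
next
  case (Suc k)
  let ?K = "\<lambda>y. measure lborel ({0..1} \<inter> {u. step dn up y u = x})"
  have "(\<Sum>x0\<le>L. \<pi> x0 * chain_law dn up x0 (Suc k) x)
      = (\<Sum>x0\<le>L. \<Sum>y\<le>L + k. \<pi> x0 * chain_law dn up x0 k y * ?K y)"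
    by (intro sum.cong) (auto simp: chain_law_Suc[where L = "L + k"] sum_distrib_left mult.assoc)
  also have "\<dots> = (\<Sum>y\<le>L + k. \<pi> y * ?K y)"
    by (subst sum.swap) (simp add: sum_distrib_right[symmetric] Suc.IH)
  also have "\<dots> = (\<Sum>y\<le>L + k. \<pi> y * bd_kernel dn up y x)"
  proof (rule sum.cong)
    fix y
    show "\<pi> y * ?K y = \<pi> y * bd_kernel dn up y x"
      using rates[of y] support[of y] dn0 by (cases "y \<le> L") (auto simp: measure_step_eq)
  qed simp
  also have "\<dots> = \<pi> x"
    by (rule sum_bd_kernel_balance[OF balance support _ dn0]) auto
  finally show ?case .
qed

lemma measurable_chain_from [measurable]:
  assumes "X0 \<in> M \<rightarrow>\<^sub>M count_space UNIV"
  shows "(\<lambda>\<omega>. chain dn up (X0 \<omega>) (\<lambda>j. U j \<omega>) k) \<in> M \<rightarrow>\<^sub>M count_space UNIV"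
  using measurable_compose_countable[where f = "\<lambda>x0 \<omega>. chain dn up x0 (\<lambda>j. U j \<omega>) k", OF _ assms]
  by simp

lemma gap_hit_event:
  assumes X0: "X0 \<in> M \<rightarrow>\<^sub>M count_space UNIV"
  shows "{\<omega> \<in> space M. X0 \<omega> \<le> L \<and> U k \<omega> \<in> gap_interval upA upB (chain dn upA (X0 \<omega>) (\<lambda>j. U j \<omega>) k)} \<in> events"
proof -
  have "Measurable.pred M (\<lambda>\<omega>. U k \<omega> \<in> gap_interval upA upB (chain dn upA (X0 \<omega>) (\<lambda>j. U j \<omega>) k))"
    by (rule measurable_compose_countable[where f = "\<lambda>x \<omega>. U k \<omega> \<in> gap_interval upA upB x",
          OF _ measurable_chain_from[OF X0]]) measurable
  moreover have "Measurable.pred M (\<lambda>\<omega>. X0 \<omega> \<le> L)"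
    using X0 by measurable
  ultimately show ?thesis by measurable
qed

lemma prob_start_chain_gap_le:
  fixes X0 :: "'a \<Rightarrow> nat" and \<pi> dn upA upB :: "nat \<Rightarrow> real"
  assumes law: "\<And>x. prob {\<omega> \<in> space M. X0 \<omega> = x} = \<pi> x"
    and X0_indep: "\<And>x A. A \<in> sets (PiM UNIV (\<lambda>_. borel)) \<Longrightarrow>
      prob {\<omega> \<in> space M. X0 \<omega> = x \<and> (\<lambda>j. U j \<omega>) \<in> A}
        = prob {\<omega> \<in> space M. X0 \<omega> = x} * prob {\<omega> \<in> space M. (\<lambda>j. U j \<omega>) \<in> A}"
  shows "prob {\<omega> \<in> space M. X0 \<omega> = x0 \<and> chain dn upA x0 (\<lambda>j. U j \<omega>) k = x
      \<and> U k \<omega> \<in> gap_interval upA upB x}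
    \<le> \<pi> x0 * chain_law dn upA x0 k x * \<bar>upA x - upB x\<bar>"
proof -
  define A where "A = {u. chain dn upA x0 u k = x \<and> u k \<in> gap_interval upA upB x}"
  have "Measurable.pred (PiM UNIV (\<lambda>_. borel)) (\<lambda>u. chain dn upA x0 u k = x \<and> u k \<in> gap_interval upA upB x)"
    using measurable_chain[of k UNIV dn upA x0] by measurable
  then have A: "A \<in> sets (PiM UNIV (\<lambda>_. borel))"
    unfolding A_def pred_def by (simp add: space_PiM PiE_def extensional_def)
  have "prob {\<omega> \<in> space M. X0 \<omega> = x0 \<and> chain dn upA x0 (\<lambda>j. U j \<omega>) k = x \<and> U k \<omega> \<in> gap_interval upA upB x}
      = \<pi> x0 * prob {\<omega> \<in> space M. (\<lambda>j. U j \<omega>) \<in> A}"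
    using X0_indep[OF A, of x0] unfolding law by (simp add: A_def)
  also have "\<dots> = \<pi> x0 * (chain_law dn upA x0 k x * measure lborel ({0..1} \<inter> gap_interval upA upB x))"
    using prob_chain_and_U_in[of "gap_interval upA upB x" dn upA x0 k x] by (simp add: A_def)
  also have "\<dots> \<le> \<pi> x0 * (chain_law dn upA x0 k x * \<bar>upA x - upB x\<bar>)"
    using measure_gap_interval_le chain_law_nonneg law[of x0] measure_nonneg[of M]
    by (metis mult_left_mono)
  finally show ?thesis by (simp add: mult.assoc)
qed

lemma prob_gap_hit_le:
  fixes X0 :: "'a \<Rightarrow> nat" and \<pi> dn upA upB :: "nat \<Rightarrow> real"
  assumes X0: "X0 \<in> M \<rightarrow>\<^sub>M count_space UNIV"
    and law: "\<And>x. prob {\<omega> \<in> space M. X0 \<omega> = x} = \<pi> x"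
    and X0_indep: "\<And>x A. A \<in> sets (PiM UNIV (\<lambda>_. borel)) \<Longrightarrow>
      prob {\<omega> \<in> space M. X0 \<omega> = x \<and> (\<lambda>j. U j \<omega>) \<in> A}
        = prob {\<omega> \<in> space M. X0 \<omega> = x} * prob {\<omega> \<in> space M. (\<lambda>j. U j \<omega>) \<in> A}"
    and stationary: "\<And>x. (\<Sum>x0\<le>L. \<pi> x0 * chain_law dn upA x0 k x) = \<pi> x"
    and support: "\<And>x. L < x \<Longrightarrow> \<pi> x = 0"
  shows "prob {\<omega> \<in> space M. X0 \<omega> \<le> L \<and> U k \<omega> \<in> gap_interval upA upB (chain dn upA (X0 \<omega>) (\<lambda>j. U j \<omega>) k)}
    \<le> (\<Sum>x\<le>L. \<pi> x * \<bar>upA x - upB x\<bar>)"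
proof -
  define E where "E x0 x = {\<omega> \<in> space M. X0 \<omega> = x0 \<and> chain dn upA x0 (\<lambda>j. U j \<omega>) k = x
      \<and> U k \<omega> \<in> gap_interval upA upB x}" for x0 x
  have E_sets: "E x0 x \<in> events" for x0 x
    using X0 unfolding E_def by measurable
  have "{\<omega> \<in> space M. X0 \<omega> \<le> L \<and> U k \<omega> \<in> gap_interval upA upB (chain dn upA (X0 \<omega>) (\<lambda>j. U j \<omega>) k)}
      \<subseteq> (\<Union>x0\<le>L. \<Union>x\<le>L + k. E x0 x)"
    using chain_le[of dn upA _ _ k] unfolding E_def by (fastforce intro: order_trans)
  then have "prob {\<omega> \<in> space M. X0 \<omega> \<le> L \<and> U k \<omega> \<in> gap_interval upA upB (chain dn upA (X0 \<omega>) (\<lambda>j. U j \<omega>) k)}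
      \<le> prob (\<Union>x0\<le>L. \<Union>x\<le>L + k. E x0 x)"
    using E_sets by (intro finite_measure_mono) auto
  also have "\<dots> \<le> (\<Sum>x0\<le>L. \<Sum>x\<le>L + k. prob (E x0 x))"
    using E_sets by (intro order_trans[OF measure_UNION_le] sum_mono measure_UNION_le) auto
  also have "\<dots> \<le> (\<Sum>x0\<le>L. \<Sum>x\<le>L + k. \<pi> x0 * chain_law dn upA x0 k x * \<bar>upA x - upB x\<bar>)"
    unfolding E_def by (intro sum_mono prob_start_chain_gap_le[OF law X0_indep])
  also have "\<dots> = (\<Sum>x\<le>L + k. \<pi> x * \<bar>upA x - upB x\<bar>)"
    by (subst sum.swap) (simp add: sum_distrib_right[symmetric] stationary)
  also have "\<dots> = (\<Sum>x\<le>L. \<pi> x * \<bar>upA x - upB x\<bar>)"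
    using support by (intro sum.mono_neutral_right) auto
  finally show ?thesis .
qed

lemma prob_coupling_breaks_le:
  fixes X0 Y0 :: "'a \<Rightarrow> nat" and \<pi> dn upA upB :: "nat \<Rightarrow> real"
  assumes X0: "X0 \<in> M \<rightarrow>\<^sub>M count_space UNIV"
    and law: "\<And>x. prob {\<omega> \<in> space M. X0 \<omega> = x} = \<pi> x"
    and X0_indep: "\<And>x A. A \<in> sets (PiM UNIV (\<lambda>_. borel)) \<Longrightarrow>
      prob {\<omega> \<in> space M. X0 \<omega> = x \<and> (\<lambda>j. U j \<omega>) \<in> A}
        = prob {\<omega> \<in> space M. X0 \<omega> = x} * prob {\<omega> \<in> space M. (\<lambda>j. U j \<omega>) \<in> A}"
    and stationary: "\<And>k x. (\<Sum>x0\<le>L. \<pi> x0 * chain_law dn upA x0 k x) = \<pi> x"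
    and support: "\<And>x. L < x \<Longrightarrow> \<pi> x = 0"
    and mass: "(\<Sum>x\<le>L. \<pi> x) = 1"
  shows "prob {\<omega> \<in> space M. \<exists>k<n.
      chain dn upA (X0 \<omega>) (\<lambda>j. U j \<omega>) k = chain dn upB (Y0 \<omega>) (\<lambda>j. U j \<omega>) k \<and>
      chain dn upA (X0 \<omega>) (\<lambda>j. U j \<omega>) (Suc k) \<noteq> chain dn upB (Y0 \<omega>) (\<lambda>j. U j \<omega>) (Suc k)}
    \<le> real n * (\<Sum>x\<le>L. \<pi> x * \<bar>upA x - upB x\<bar>)"
proof -
  let ?hit = "\<lambda>k. {\<omega> \<in> space M. X0 \<omega> \<le> L \<and>
    U k \<omega> \<in> gap_interval upA upB (chain dn upA (X0 \<omega>) (\<lambda>j. U j \<omega>) k)}"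
  have "AE \<omega> in M. X0 \<omega> \<in> {..L}"
    by (rule AE_in_finite_support[OF X0 _ law mass]) simp
  then have "AE \<omega> in M. \<omega> \<in> {\<omega> \<in> space M. \<exists>k<n.
      chain dn upA (X0 \<omega>) (\<lambda>j. U j \<omega>) k = chain dn upB (Y0 \<omega>) (\<lambda>j. U j \<omega>) k \<and>
      chain dn upA (X0 \<omega>) (\<lambda>j. U j \<omega>) (Suc k) \<noteq> chain dn upB (Y0 \<omega>) (\<lambda>j. U j \<omega>) (Suc k)}
      \<longrightarrow> \<omega> \<in> (\<Union>k<n. ?hit k)"
    by eventually_elim (force dest: step_neq_imp_gap)
  then have "prob {\<omega> \<in> space M. \<exists>k<n.
      chain dn upA (X0 \<omega>) (\<lambda>j. U j \<omega>) k = chain dn upB (Y0 \<omega>) (\<lambda>j. U j \<omega>) k \<and>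
      chain dn upA (X0 \<omega>) (\<lambda>j. U j \<omega>) (Suc k) \<noteq> chain dn upB (Y0 \<omega>) (\<lambda>j. U j \<omega>) (Suc k)}
      \<le> prob (\<Union>k<n. ?hit k)"
    using gap_hit_event[OF X0] by (intro finite_measure_mono_AE) auto
  also have "\<dots> \<le> (\<Sum>k<n. prob (?hit k))"
    using gap_hit_event[OF X0] by (intro measure_UNION_le) auto
  also have "\<dots> \<le> (\<Sum>k<n. \<Sum>x\<le>L. \<pi> x * \<bar>upA x - upB x\<bar>)"
    by (intro sum_mono prob_gap_hit_le[OF X0 law X0_indep stationary support])
  finally show ?thesis by simp
qed

end

theorem lemma5p4:
  fixes N n :: nat
    and M :: "'a measure"
    and X0 Y0 :: "'a \<Rightarrow> nat"
    and U :: "nat \<Rightarrow> 'a \<Rightarrow> real"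
  assumes N5: "N \<ge> 5"
    and P: "prob_space M"
    and X0_meas: "X0 \<in> measurable M (count_space UNIV)"
    and Y0_meas: "Y0 \<in> measurable M (count_space UNIV)"
    and X0_law: "\<And>x. measure M {\<omega> \<in> space M. X0 \<omega> = x} = checkpi N x"
    and Y0_law: "\<And>y. measure M {\<omega> \<in> space M. Y0 \<omega> = y} = zeta N y"
    and U_unif: "\<And>k. distr M lborel (U k) = uniform_measure lborel {0..1}"
    and U_indep: "prob_space.indep_vars M (\<lambda>_. borel) U UNIV"
    and init_indep: "\<And>x y A. A \<in> sets (PiM UNIV (\<lambda>_. borel)) \<Longrightarrow>
        measure M {\<omega> \<in> space M. X0 \<omega> = x \<and> Y0 \<omega> = y \<and> (\<lambda>k. U k \<omega>) \<in> A}
        = measure M {\<omega> \<in> space M. X0 \<omega> = x \<and> Y0 \<omega> = y}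
          * measure M {\<omega> \<in> space M. (\<lambda>k. U k \<omega>) \<in> A}"
  shows "measure M {\<omega> \<in> space M. 0 < Zcount N (X0 \<omega>) (Y0 \<omega>) (\<lambda>k. U k \<omega>) n}
           \<le> 2 ^ N * real n / fact N"
proof -
  interpret iid_uniform M U
    using P U_indep U_unif by (intro iid_uniform.intro iid_uniform_axioms.intro)
  have Y0_ae: "AE \<omega> in M. Y0 \<omega> \<in> {..N - 4}"
    by (rule AE_in_finite_support[OF Y0_meas _ Y0_law zeta_sum]) simp
  have X0_indep: "\<And>x A. A \<in> sets (PiM UNIV (\<lambda>_. borel)) \<Longrightarrow>
      prob {\<omega> \<in> space M. X0 \<omega> = x \<and> (\<lambda>j. U j \<omega>) \<in> A}
      = prob {\<omega> \<in> space M. X0 \<omega> = x} * prob {\<omega> \<in> space M. (\<lambda>j. U j \<omega>) \<in> A}"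
    using prob_indep_marginal[OF X0_meas Y0_meas measurable_U_seq _ _ Y0_ae init_indep] by simp
  have stationary: "(\<Sum>x0\<le>N - 4. checkpi N x0 * chain_law (down N) (upP N) x0 k x) = checkpi N x" for k x
    using rates_bounded[OF N5] by (intro chain_law_stationary checkpi_detailed_balance[OF N5] checkpi_eq_0) auto
  have Z_pos: "{\<omega> \<in> space M. 0 < Zcount N (X0 \<omega>) (Y0 \<omega>) (\<lambda>k. U k \<omega>) n}
    = {\<omega> \<in> space M. \<exists>k<n.
      chain (down N) (upP N) (X0 \<omega>) (\<lambda>j. U j \<omega>) k = chain (down N) (upR N) (Y0 \<omega>) (\<lambda>j. U j \<omega>) k \<and>
      chain (down N) (upP N) (X0 \<omega>) (\<lambda>j. U j \<omega>) (Suc k) \<noteq> chain (down N) (upR N) (Y0 \<omega>) (\<lambda>j. U j \<omega>) (Suc k)}"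
    by (auto simp: Zcount_def Xchain_def Ychain_def card_gt_0_iff simp del: chain.simps)
  have "prob {\<omega> \<in> space M. 0 < Zcount N (X0 \<omega>) (Y0 \<omega>) (\<lambda>k. U k \<omega>) n}
      \<le> real n * (\<Sum>x\<le>N - 4. checkpi N x * \<bar>upP N x - upR N x\<bar>)"
    unfolding Z_pos
    using N5 by (intro prob_coupling_breaks_le[OF X0_meas X0_law X0_indep stationary checkpi_eq_0] checkpi_sum) simp_all
  also have "\<dots> \<le> real n * (2 ^ N / fact N)"
    by (intro mult_left_mono checkpi_gap_sum[OF N5]) simp
  finally show ?thesis by (simp add: mult.commute)
qed

end
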